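(* Let $s\in(0,1)$ and let $F\in\mathcal M_s$ be an even function. Suppose that for some $\gamma>0$ one has $\int_\gamma F(x)x^{2k}=0$ for all $k\in\mathbb Z_{\ge0}$. Then $F=0$.
   Context: Fix $q\in(0,1)$. Notation: $(a;q)_\infty=\prod_{j\ge0}(1-aq^j)$, $e_q(x)=1/(x;q)_\infty$. For $\gamma>0$, $\int_\gamma f=(1-q)\sum_{k\in\mathbb Z}\sum_{\epsilon=\pm1}q^k\gamma f(\epsilon q^k\gamma)$ whenever absolutely convergent. For $s>0$, $\mathcal M_s$ is the set of functions $F(x)=f(x)e_{q^2}(-x^2)$ (holomorphic on $|\mathrm{Im}\,x|<1$) where $f(x)=\sum_{l\ge0}a_lx^l$ with $|a_l|\le Cs^lq^{l^2/2}$ for all $l$, for some $C>0$. *)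

theory Defs
  imports "HOL-Analysis.Analysis"
begin

definition qpoch_inf :: "complex \<Rightarrow> real \<Rightarrow> complex" where
  "qpoch_inf a q = (\<Prod>j. 1 - a * of_real (q ^ j))"

definition e_q :: "real \<Rightarrow> complex \<Rightarrow> complex" where
  "e_q q x = 1 / qpoch_inf x q"

definition qint_term :: "real \<Rightarrow> real \<Rightarrow> (complex \<Rightarrow> complex) \<Rightarrow> int \<times> real \<Rightarrow> complex" where
  "qint_term q \<gamma> f = (\<lambda>(k, \<epsilon>). of_real (q powi k * \<gamma>) * f (of_real (\<epsilon> * q powi k * \<gamma>)))"

definition qint_exists :: "real \<Rightarrow> real \<Rightarrow> (complex \<Rightarrow> complex) \<Rightarrow> bool" where
  "qint_exists q \<gamma> f \<longleftrightarrow> (\<lambda>p. norm (qint_term q \<gamma> f p)) summable_on (UNIV \<times> {1, -1})"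

definition qint :: "real \<Rightarrow> real \<Rightarrow> (complex \<Rightarrow> complex) \<Rightarrow> complex" where
  "qint q \<gamma> f = of_real (1 - q) * (\<Sum>\<^sub>\<infinity>p\<in>UNIV \<times> {1, -1}. qint_term q \<gamma> f p)"

definition M_s :: "real \<Rightarrow> real \<Rightarrow> (complex \<Rightarrow> complex) set" where
  "M_s q s = {F. \<exists>(a :: nat \<Rightarrow> complex) C. C > 0 \<and>
      (\<forall>l. norm (a l) \<le> C * s ^ l * q powr (real l ^ 2 / 2)) \<and>
      (\<forall>x. \<bar>Im x\<bar> < 1 \<longrightarrow> F x = (\<Sum>l. a l * x ^ l) * e_q (q ^ 2) (- (x ^ 2)))}"

end

(*
  Write F = f * e_{q^2}(-x^2) with f(x) = \<Sum> a_l x^l entire. On the real line e_{q^2}(-x^2) is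
  1 / \<Prod>_j (1 + x^2 q^(2j)), positive and even, so f is even there. The Jackson integral is a
  sum over the points \<plusminus>q^k \<gamma> (k \<in> \<int>) with positive weights w; pairing its vanishing even
  moments with the (even) Taylor coefficients of cnj f gives \<Sum> w |f|^2 = 0. Hence f vanishes
  at the points q^k \<gamma>, which accumulate at 0, and f = 0 by the identity theorem.

  Exchanging the two summations needs absolute convergence, which comes from two Gaussian
  estimates at the outer points \<gamma> / q^K: completing the square in |a_l| \<le> C s^l q^(l^2/2) gives
  \<Sum> |a_l| (\<gamma>/q^K)^l = O((s\<gamma>)^K q^(-K^2/2)), while the first K factors of the product give
  e_{q^2}(-x^2) = O(q^(K^2+K) \<gamma>^(-2K)). The weighted terms thus decay like s^(2K); this is
  where s < 1 is used.
*)

theory Submission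
  imports Defs "HOL-Complex_Analysis.Conformal_Mappings"
begin

section \<open>Gaussian series\<close>

lemma powr_half_square_eq:
  fixes q :: real
  assumes "0 < q"
  shows "q powr (real n ^ 2 / 2) = (sqrt q ^ n) ^ n"
proof -
  have "(sqrt q ^ n) ^ n = (q powr (1/2)) ^ (n * n)"
    using assms by (simp add: power_mult sqrt_def root_powr_inverse)
  also have "\<dots> = q powr (real n ^ 2 / 2)"
    using assms by (simp add: powr_realpow [symmetric] powr_powr power2_eq_square)
  finally show ?thesis ..
qed

lemma summable_gaussian_power:
  fixes q \<rho> :: real
  assumes "0 < q" "q < 1"
  shows "summable (\<lambda>n. \<rho> ^ n * q powr (real n ^ 2 / 2))"
proof (rule summable_comparison_test_ev)
  have "(\<lambda>n. \<bar>\<rho>\<bar> * sqrt q ^ n) \<longlonglongrightarrow> 0"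
    using assms by (intro tendsto_mult_right_zero LIMSEQ_power_zero) auto
  then have "eventually (\<lambda>n. \<bar>\<rho>\<bar> * sqrt q ^ n < 1/2) sequentially"
    by (rule order_tendstoD) simp
  then show "eventually (\<lambda>n. norm (\<rho> ^ n * q powr (real n ^ 2 / 2)) \<le> (1/2) ^ n) sequentially"
  proof eventually_elim
    case (elim n)
    have "norm (\<rho> ^ n * q powr (real n ^ 2 / 2)) = (\<bar>\<rho>\<bar> * sqrt q ^ n) ^ n"
      using assms by (simp add: powr_half_square_eq abs_mult power_abs power_mult_distrib)
    also have "\<dots> \<le> (1/2) ^ n"
      using assms elim by (intro power_mono) auto
    finally show ?case .
  qed
qed simp

lemma summable_on_int_if_summable_halves:
  fixes g :: "int \<Rightarrow> real"
  assumes "\<And>d. 0 \<le> g d" "summable (\<lambda>n. g (int n))" "summable (\<lambda>n. g (- int n))"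
  shows "g summable_on UNIV"
proof -
  have "g summable_on range int"
    using assms by (subst summable_on_reindex) (auto simp: o_def summable_on_UNIV_nonneg_real_iff)
  moreover have "g summable_on range (\<lambda>n. - int n)"
    using assms by (subst summable_on_reindex) (auto simp: inj_def o_def summable_on_UNIV_nonneg_real_iff)
  moreover have "UNIV = range int \<union> range (\<lambda>n. - int n)"
  proof -
    have "d \<in> range int \<union> range (\<lambda>n. - int n)" for d :: int
      by (cases "0 \<le> d") (auto simp: image_iff intro: exI [where x = "nat \<bar>d\<bar>"])
    then show ?thesis by blast
  qed
  ultimately show ?thesis
    by (metis summable_on_union)
qed

lemma summable_on_theta:
  fixes q \<beta> :: real
  assumes "0 < q" "q < 1" "0 < \<beta>"
  shows "(\<lambda>d::int. \<beta> powi d * q powr (of_int d ^ 2 / 2)) summable_on UNIV"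
proof (rule summable_on_int_if_summable_halves)
  show "summable (\<lambda>n. \<beta> powi int n * q powr (of_int (int n) ^ 2 / 2))"
    using summable_gaussian_power [OF assms(1,2), of \<beta>] by simp
  show "summable (\<lambda>n. \<beta> powi (- int n) * q powr (of_int (- int n) ^ 2 / 2))"
    using summable_gaussian_power [OF assms(1,2), of "inverse \<beta>"]
    by (simp add: power_int_minus power_inverse)
qed (use assms in simp)

lemma summable_on_Times_finite_right:
  fixes g :: "'a \<Rightarrow> real"
  assumes "g summable_on A" "\<And>k. k \<in> A \<Longrightarrow> 0 \<le> g k" "finite B"
  shows "(\<lambda>(k, e). g k) summable_on A \<times> B"
proof (rule summable_on_SigmaI [where g = "\<lambda>k. of_nat (card B) * g k"])
  show "((\<lambda>e. (\<lambda>(k, e). g k) (k, e)) has_sum of_nat (card B) * g k) B" for k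
    using has_sum_finite [OF assms(3), of "\<lambda>_. g k"] by simp
qed (use assms in \<open>auto intro: summable_on_cmult_right\<close>)

lemma suminf_shift_le_infsum:
  fixes g :: "int \<Rightarrow> real" and K :: int
  assumes "g summable_on UNIV" "\<And>d. 0 \<le> g d"
  shows "summable (\<lambda>l. g (int l - K))" and "(\<Sum>l. g (int l - K)) \<le> infsum g UNIV"
proof -
  have inj: "inj (\<lambda>l::nat. int l - K)"
    by (auto simp: inj_def)
  have g_range: "g summable_on range (\<lambda>l::nat. int l - K)"
    by (rule summable_on_subset_banach [OF assms(1)]) simp
  then have shifted: "(\<lambda>l. g (int l - K)) summable_on UNIV"
    by (simp add: summable_on_reindex [OF inj] o_def)
  then show "summable (\<lambda>l. g (int l - K))"
    using assms(2) by (simp add: summable_on_UNIV_nonneg_real_iff)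
  have "(\<Sum>l. g (int l - K)) = infsum (\<lambda>l. g (int l - K)) UNIV"
    by (rule sums_unique [OF has_sum_imp_sums [OF has_sum_infsum [OF shifted]], symmetric])
  also have "\<dots> = infsum g (range (\<lambda>l::nat. int l - K))"
    using infsum_reindex [OF inj, of g] by (simp add: o_def)
  also have "\<dots> \<le> infsum g UNIV"
    by (rule infsum_mono_neutral [OF g_range assms(1)]) (simp_all add: assms(2))
  finally show "(\<Sum>l. g (int l - K)) \<le> infsum g UNIV" .
qed

section \<open>The q-Gaussian \<open>e_{q\<^sup>2}(-x\<^sup>2)\<close> on the real line\<close>

definition qgauss :: "real \<Rightarrow> real \<Rightarrow> real" where
  "qgauss q r = 1 / (\<Prod>j. 1 + r^2 * (q^2)^j)"

lemma qgauss_factors_has_prod: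
  fixes q r :: real
  assumes "0 < q" "q < 1"
  shows "(\<lambda>j. 1 + r^2 * (q^2)^j) has_prod (\<Prod>j. 1 + r^2 * (q^2)^j)"
proof (rule convergent_prod_has_prod, rule summable_imp_convergent_prod_real)
  have "q^2 < 1"
    using assms by (simp add: power_less_one_iff)
  then show "summable (\<lambda>j. \<bar>r^2 * (q^2)^j\<bar>)"
    by (simp add: abs_mult summable_mult)
  show "r^2 * (q^2)^j \<noteq> -1" for j
  proof -
    have "0 \<le> r^2 * (q^2)^j"
      by simp
    then show ?thesis
      by linarith
  qed
qed

lemma prod_le_qgauss_denom:
  fixes q r :: real
  assumes "0 < q" "q < 1"
  shows "(\<Prod>j<K. 1 + r^2 * (q^2)^j) \<le> (\<Prod>j. 1 + r^2 * (q^2)^j)"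
  by (rule prod_le_prodinf [OF qgauss_factors_has_prod [OF assms]]) (simp_all add: add_increasing)

lemma one_le_qgauss_denom:
  fixes q r :: real
  assumes "0 < q" "q < 1"
  shows "1 \<le> (\<Prod>j. 1 + r^2 * (q^2)^j)"
  using prod_le_qgauss_denom [OF assms, where K = 0] by simp

lemma qgauss_pos: "0 < q \<Longrightarrow> q < 1 \<Longrightarrow> 0 < qgauss q r"
  using one_le_qgauss_denom [of q r] by (simp add: qgauss_def)

lemma qgauss_le_1: "0 < q \<Longrightarrow> q < 1 \<Longrightarrow> qgauss q r \<le> 1"
  using one_le_qgauss_denom [of q r] by (simp add: qgauss_def)

lemma qgauss_minus [simp]: "qgauss q (- r) = qgauss q r"
  by (simp add: qgauss_def)

lemma e_q_neg_square_of_real: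
  fixes q r :: real
  assumes "0 < q" "q < 1"
  shows "e_q (q^2) (- (of_real r ^ 2)) = of_real (qgauss q r)"
proof -
  have "(\<lambda>j. complex_of_real (1 + r^2 * (q^2)^j)) has_prod of_real (\<Prod>j. 1 + r^2 * (q^2)^j)"
    using qgauss_factors_has_prod [OF assms] by (simp only: has_prod_of_real_iff)
  then have "qpoch_inf (- (of_real r ^ 2)) (q^2) = of_real (\<Prod>j. 1 + r^2 * (q^2)^j)"
    unfolding qpoch_inf_def by (simp add: has_prod_unique [symmetric])
  then show ?thesis
    by (simp add: e_q_def qgauss_def)
qed

lemma prod_square_geometric:
  fixes q r :: real
  shows "(\<Prod>j<K. r^2 * (q^2)^j) * q^K = r^(2*K) * q^(K^2)"
proof (induction K)
  case (Suc K)
  have "(\<Prod>j<Suc K. r^2 * (q^2)^j) * q^Suc K = ((\<Prod>j<K. r^2 * (q^2)^j) * q^K) * (r^2 * (q^2)^K * q)"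
    by (simp add: algebra_simps)
  also have "\<dots> = r^(2*K) * r^2 * (q^(K^2) * (q^2)^K * q)"
    by (simp add: Suc.IH)
  also have "\<dots> = r^(2 * Suc K) * q^((Suc K)^2)"
    by (simp add: power2_eq_square power_add [symmetric] power_mult [symmetric] algebra_simps)
  finally show ?case .
qed simp

lemma qgauss_le:
  fixes q r :: real
  assumes "0 < q" "q < 1" "0 < r"
  shows "qgauss q r \<le> q^K / (r^(2*K) * q^(K^2))"
proof -
  have "r^(2*K) * q^(K^2) / q^K = (\<Prod>j<K. r^2 * (q^2)^j)"
    using prod_square_geometric [of r q K] assms(1) by (simp add: field_simps)
  also have "\<dots> \<le> (\<Prod>j<K. 1 + r^2 * (q^2)^j)"
    by (intro prod_mono) simp
  also have "\<dots> \<le> (\<Prod>j. 1 + r^2 * (q^2)^j)"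
    by (rule prod_le_qgauss_denom [OF assms(1,2)])
  finally have le: "r^(2*K) * q^(K^2) / q^K \<le> (\<Prod>j. 1 + r^2 * (q^2)^j)" .
  have pos: "0 < r^(2*K) * q^(K^2) / q^K"
    using assms by simp
  have "1 / (\<Prod>j. 1 + r^2 * (q^2)^j) \<le> 1 / (r^(2*K) * q^(K^2) / q^K)"
    using le pos by (intro divide_left_mono mult_pos_pos) simp_all
  then show ?thesis
    by (simp add: qgauss_def)
qed

section \<open>Growth of the entire factor\<close>

definition majorant :: "(nat \<Rightarrow> complex) \<Rightarrow> real \<Rightarrow> real" where
  "majorant a r = (\<Sum>l. norm (a l) * r ^ l)"

lemma summable_majorant:
  fixes a :: "nat \<Rightarrow> complex" and q s C r :: real
  assumes "0 < q" "q < 1" "\<And>l. norm (a l) \<le> C * s^l * q powr (real l ^ 2 / 2)"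
  shows "summable (\<lambda>l. norm (a l) * r ^ l)"
proof (rule summable_comparison_test')
  show "summable (\<lambda>l. C * ((s * \<bar>r\<bar>)^l * q powr (real l ^ 2 / 2)))"
    by (intro summable_mult summable_gaussian_power assms(1,2))
  fix l :: nat
  have "norm (norm (a l) * r ^ l) \<le> C * s^l * q powr (real l ^ 2 / 2) * \<bar>r\<bar> ^ l"
    using assms(3) by (simp add: abs_mult power_abs mult_right_mono)
  then show "norm (norm (a l) * r ^ l) \<le> C * ((s * \<bar>r\<bar>)^l * q powr (real l ^ 2 / 2))"
    by (simp add: power_mult_distrib mult_ac)
qed

lemma majorant_nonneg:
  assumes "summable (\<lambda>l. norm (a l) * r ^ l)" "0 \<le> r"
  shows "0 \<le> majorant a r"
  unfolding majorant_def using assms by (intro suminf_nonneg) auto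

lemma majorant_mono:
  assumes "summable (\<lambda>l. norm (a l) * R ^ l)" "0 \<le> r" "r \<le> R"
  shows "majorant a r \<le> majorant a R"
proof -
  have le: "norm (a l) * r ^ l \<le> norm (a l) * R ^ l" for l
    using assms by (intro mult_left_mono power_mono) auto
  have "summable (\<lambda>l. norm (a l) * r ^ l)"
    by (rule summable_comparison_test' [OF assms(1)]) (use le assms(2) in auto)
  then show ?thesis
    unfolding majorant_def by (rule suminf_le [OF le _ assms(1)])
qed

lemma norm_power_series_le_majorant:
  fixes a :: "nat \<Rightarrow> complex"
  assumes "summable (\<lambda>l. norm (a l) * norm z ^ l)"
  shows "norm (\<Sum>l. a l * z ^ l) \<le> majorant a (norm z)"
  unfolding majorant_def
  using summable_norm [of "\<lambda>l. a l * z ^ l"] assms by (simp add: norm_mult norm_power)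

text \<open>Completing the square: \<open>l\<^sup>2/2 - K l = (l - K)\<^sup>2/2 - K\<^sup>2/2\<close>.\<close>
lemma gaussian_weight_shift:
  fixes q \<beta> :: real and K l :: nat
  assumes "0 < q" "0 < \<beta>"
  shows "\<beta>^l * q powr (real l ^ 2 / 2) / q^(K*l)
       = \<beta>^K / q powr (real K ^ 2 / 2) * (\<beta> powi (int l - int K) * q powr (of_int (int l - int K) ^ 2 / 2))"
proof -
  have "\<beta> powi (int K + (int l - int K)) = \<beta> powi int K * \<beta> powi (int l - int K)"
    using assms by (intro power_int_add) simp
  then have \<beta>_part: "\<beta>^K * \<beta> powi (int l - int K) = \<beta>^l"
    by simp
  have "(real l - real K)^2 / 2 - real K ^ 2 / 2 = real l ^ 2 / 2 - real K * real l"
    by (simp add: power2_eq_square field_simps)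
  moreover have "q^(K*l) = q powr (real K * real l)"
    using assms by (simp add: powr_realpow flip: of_nat_mult)
  ultimately have q_part: "q powr (of_int (int l - int K) ^ 2 / 2) / q powr (real K ^ 2 / 2)
      = q powr (real l ^ 2 / 2) / q^(K*l)"
    by (simp add: powr_diff [symmetric])
  have "\<beta>^K / q powr (real K ^ 2 / 2) * (\<beta> powi (int l - int K) * q powr (of_int (int l - int K) ^ 2 / 2))
      = (\<beta>^K * \<beta> powi (int l - int K)) * (q powr (of_int (int l - int K) ^ 2 / 2) / q powr (real K ^ 2 / 2))"
    by simp
  also have "\<dots> = \<beta>^l * q powr (real l ^ 2 / 2) / q^(K*l)"
    by (simp only: \<beta>_part q_part times_divide_eq_right)
  finally show ?thesis ..
qed

lemma majorant_le_theta:
  fixes a :: "nat \<Rightarrow> complex" and q s \<gamma> C :: real and K :: nat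
  assumes "0 < q" "q < 1" "0 < s" "0 < \<gamma>"
    and coeffs: "\<And>l. norm (a l) \<le> C * s^l * q powr (real l ^ 2 / 2)"
  shows "majorant a (\<gamma> / q^K)
    \<le> C * (\<Sum>\<^sub>\<infinity>d. (s*\<gamma>) powi d * q powr (of_int d ^ 2 / 2)) * (s*\<gamma>)^K / q powr (real K ^ 2 / 2)"
proof -
  define \<theta> where "\<theta> = (\<lambda>d::int. (s*\<gamma>) powi d * q powr (of_int d ^ 2 / 2))"
  define c where "c = C * (s*\<gamma>)^K / q powr (real K ^ 2 / 2)"
  have \<theta>_summable: "\<theta> summable_on UNIV" and \<theta>_nonneg: "\<And>d. 0 \<le> \<theta> d"
    using summable_on_theta [of q "s*\<gamma>"] assms by (simp_all add: \<theta>_def)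
  have "norm (a 0) \<le> C"
    using coeffs [of 0] assms(1) by simp
  then have "0 \<le> C"
    by (rule order_trans [OF norm_ge_zero])
  then have c_nonneg: "0 \<le> c"
    using assms by (simp add: c_def)
  have term_le: "norm (a l) * (\<gamma> / q^K)^l \<le> c * \<theta> (int l - int K)" for l
  proof -
    have "norm (a l) * (\<gamma> / q^K)^l \<le> C * s^l * q powr (real l ^ 2 / 2) * (\<gamma> / q^K)^l"
      using assms by (intro mult_right_mono coeffs) auto
    also have "\<dots> = C * ((s*\<gamma>)^l * q powr (real l ^ 2 / 2) / q^(K*l))"
      by (simp add: power_divide power_mult_distrib power_mult)
    also have "\<dots> = c * \<theta> (int l - int K)"
      using gaussian_weight_shift [of q "s*\<gamma>" l K] assms by (simp add: c_def \<theta>_def)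
    finally show ?thesis .
  qed
  have summable_shift: "summable (\<lambda>l. c * \<theta> (int l - int K))"
    using suminf_shift_le_infsum(1) [OF \<theta>_summable \<theta>_nonneg] by (rule summable_mult)
  have "majorant a (\<gamma> / q^K) \<le> (\<Sum>l. c * \<theta> (int l - int K))"
    unfolding majorant_def
    using summable_majorant [OF assms(1,2) coeffs] term_le summable_shift by (intro suminf_le) auto
  also have "\<dots> = c * (\<Sum>l. \<theta> (int l - int K))"
    using suminf_shift_le_infsum(1) [OF \<theta>_summable \<theta>_nonneg] by (rule suminf_mult)
  also have "\<dots> \<le> c * infsum \<theta> UNIV"
    using suminf_shift_le_infsum(2) [OF \<theta>_summable \<theta>_nonneg] c_nonneg by (rule mult_left_mono)
  finally show ?thesis
    by (simp add: c_def \<theta>_def mult_ac)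
qed

lemma qgrid_inner_le:
  fixes a :: "nat \<Rightarrow> complex" and q \<gamma> :: real
  assumes "0 < q" "q < 1" "0 < \<gamma>" and entire: "\<And>r. summable (\<lambda>l. norm (a l) * r ^ l)"
  shows "q^K * \<gamma> * qgauss q (q^K * \<gamma>) * majorant a (q^K * \<gamma>) ^ 2 \<le> \<gamma> * majorant a \<gamma> ^ 2 * q^K"
proof -
  have "q^K * \<gamma> \<le> \<gamma>"
    using assms by (simp add: power_le_one mult_left_le_one_le)
  then have "majorant a (q^K * \<gamma>) \<le> majorant a \<gamma>"
    using assms by (intro majorant_mono entire) auto
  moreover have "0 \<le> majorant a (q^K * \<gamma>)"
    using assms by (intro majorant_nonneg entire) simp
  ultimately have "majorant a (q^K * \<gamma>) ^ 2 \<le> majorant a \<gamma> ^ 2"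
    by (rule power_mono)
  moreover have "qgauss q (q^K * \<gamma>) \<le> 1"
    using assms(1,2) by (rule qgauss_le_1)
  ultimately have "qgauss q (q^K * \<gamma>) * majorant a (q^K * \<gamma>) ^ 2 \<le> 1 * majorant a \<gamma> ^ 2"
    using qgauss_pos [OF assms(1,2)] by (intro mult_mono) (simp_all add: less_imp_le)
  then have "q^K * \<gamma> * (qgauss q (q^K * \<gamma>) * majorant a (q^K * \<gamma>) ^ 2)
      \<le> q^K * \<gamma> * majorant a \<gamma> ^ 2"
    using assms by (intro mult_left_mono) simp_all
  then show ?thesis
    by (simp add: mult_ac)
qed

lemma qgrid_outer_le:
  fixes a :: "nat \<Rightarrow> complex" and q s \<gamma> C :: real and K :: nat
  assumes "0 < q" "q < 1" "0 < s" "0 < \<gamma>"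
    and coeffs: "\<And>l. norm (a l) \<le> C * s^l * q powr (real l ^ 2 / 2)"
  shows "\<gamma> / q^K * qgauss q (\<gamma> / q^K) * majorant a (\<gamma> / q^K) ^ 2
    \<le> \<gamma> * (C * (\<Sum>\<^sub>\<infinity>d. (s*\<gamma>) powi d * q powr (of_int d ^ 2 / 2)))^2 * (s^2)^K"
proof -
  define B where "B = C * (\<Sum>\<^sub>\<infinity>d. (s*\<gamma>) powi d * q powr (of_int d ^ 2 / 2))"
  have "majorant a (\<gamma> / q^K) \<le> B * (s*\<gamma>)^K / q powr (real K ^ 2 / 2)"
    using majorant_le_theta [OF assms] by (simp add: B_def mult_ac)
  moreover have "0 \<le> majorant a (\<gamma> / q^K)"
    using assms by (intro majorant_nonneg summable_majorant [OF assms(1,2) coeffs]) simp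
  ultimately have "majorant a (\<gamma> / q^K) ^ 2 \<le> (B * (s*\<gamma>)^K / q powr (real K ^ 2 / 2)) ^ 2"
    by (rule power_mono)
  also have "(q powr (real K ^ 2 / 2)) ^ 2 = q^(K^2)"
    using assms(1) by (simp add: powr_realpow [symmetric] powr_powr flip: powr_power)
  then have "(B * (s*\<gamma>)^K / q powr (real K ^ 2 / 2)) ^ 2 = B^2 * (s*\<gamma>)^(2*K) / q^(K^2)"
    by (simp add: power_divide power_mult_distrib mult.commute flip: power_mult)
  finally have majorant_sq: "majorant a (\<gamma> / q^K) ^ 2 \<le> B^2 * (s*\<gamma>)^(2*K) / q^(K^2)" .
  have "K * (2 * K) = K^2 + K^2"
    by (simp add: power2_eq_square)
  then have "(q^K)^(2*K) = q^(K^2) * q^(K^2)"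
    by (simp flip: power_mult power_add)
  then have gauss: "qgauss q (\<gamma> / q^K) \<le> q^K * q^(K^2) / \<gamma>^(2*K)"
    using qgauss_le [of q "\<gamma> / q^K" K] assms by (simp add: power_divide field_simps)
  have "\<gamma> / q^K * qgauss q (\<gamma> / q^K) * majorant a (\<gamma> / q^K) ^ 2
      \<le> \<gamma> / q^K * (q^K * q^(K^2) / \<gamma>^(2*K)) * (B^2 * (s*\<gamma>)^(2*K) / q^(K^2))"
    using assms gauss majorant_sq qgauss_pos [OF assms(1,2)]
    by (intro mult_mono mult_left_mono) (simp_all add: less_imp_le)
  also have "\<dots> = \<gamma> * B^2 * (s^2)^K"
    using assms by (simp add: power_mult_distrib power_mult field_simps) (simp flip: power_mult add: mult.commute)
  finally show ?thesis
    by (simp add: B_def)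
qed

lemma summable_on_qgrid:
  fixes a :: "nat \<Rightarrow> complex" and q s \<gamma> C :: real
  assumes "0 < q" "q < 1" "0 < s" "s < 1" "0 < \<gamma>"
    and coeffs: "\<And>l. norm (a l) \<le> C * s^l * q powr (real l ^ 2 / 2)"
  shows "(\<lambda>k::int. q powi k * \<gamma> * qgauss q (q powi k * \<gamma>) * majorant a (q powi k * \<gamma>) ^ 2)
    summable_on UNIV"
proof (rule summable_on_int_if_summable_halves)
  define g where "g t = t * qgauss q t * majorant a t ^ 2" for t
  have g_nonneg: "0 \<le> g t" if "0 < t" for t
    using that qgauss_pos [OF assms(1,2)] by (simp add: g_def less_imp_le)
  then show "0 \<le> q powi k * \<gamma> * qgauss q (q powi k * \<gamma>) * majorant a (q powi k * \<gamma>) ^ 2" for k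
    using assms by (simp add: g_def)
  have "summable (\<lambda>n. g (q^n * \<gamma>))"
  proof (rule summable_comparison_test')
    show "summable (\<lambda>n. \<gamma> * majorant a \<gamma> ^ 2 * q^n)"
      using assms by (intro summable_mult summable_geometric) simp
    show "norm (g (q^n * \<gamma>)) \<le> \<gamma> * majorant a \<gamma> ^ 2 * q^n" for n
    proof -
      have "norm (g (q^n * \<gamma>)) = g (q^n * \<gamma>)"
        using g_nonneg [of "q^n * \<gamma>"] assms by simp
      also have "\<dots> \<le> \<gamma> * majorant a \<gamma> ^ 2 * q^n"
        unfolding g_def by (rule qgrid_inner_le [OF assms(1,2,5) summable_majorant [OF assms(1,2) coeffs]])
      finally show ?thesis .
    qed
  qed
  then show "summable (\<lambda>n. q powi int n * \<gamma> * qgauss q (q powi int n * \<gamma>)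
      * majorant a (q powi int n * \<gamma>) ^ 2)"
    by (simp add: g_def)
  have "summable (\<lambda>n. g (\<gamma> / q^n))"
  proof (rule summable_comparison_test')
    define B where "B = C * (\<Sum>\<^sub>\<infinity>d. (s*\<gamma>) powi d * q powr (of_int d ^ 2 / 2))"
    have "s^2 < 1"
      using assms by (simp add: power_less_one_iff)
    then show "summable (\<lambda>n. \<gamma> * B^2 * (s^2)^n)"
      by (intro summable_mult summable_geometric) simp
    show "norm (g (\<gamma> / q^n)) \<le> \<gamma> * B^2 * (s^2)^n" for n
    proof -
      have "norm (g (\<gamma> / q^n)) = g (\<gamma> / q^n)"
        using g_nonneg [of "\<gamma> / q^n"] assms by simp
      also have "\<dots> \<le> \<gamma> * B^2 * (s^2)^n"
        unfolding g_def B_def by (rule qgrid_outer_le [OF assms(1,2,3,5) coeffs])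
      finally show ?thesis .
    qed
  qed
  then show "summable (\<lambda>n. q powi (- int n) * \<gamma> * qgauss q (q powi (- int n) * \<gamma>)
      * majorant a (q powi (- int n) * \<gamma>) ^ 2)"
    by (simp add: g_def power_int_minus divide_inverse mult_ac)
qed

section \<open>Vanishing even moments\<close>

lemma even_power_series_cnj_has_sum:
  fixes a :: "nat \<Rightarrow> complex" and y :: real
  assumes summable: "summable (\<lambda>l. norm (a l) * \<bar>y\<bar> ^ l)"
    and even: "(\<Sum>l. a l * of_real (- y) ^ l) = (\<Sum>l. a l * of_real y ^ l)"
  shows "((\<lambda>l. cnj (if even l then a l else 0) * of_real y ^ l) has_sum cnj (\<Sum>l. a l * of_real y ^ l)) UNIV"
proof (rule norm_summable_imp_has_sum)
  have norm_eq: "norm (a l * of_real t ^ l) = norm (a l) * \<bar>y\<bar> ^ l" if "\<bar>t\<bar> = \<bar>y\<bar>" for t l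
    using that by (simp add: norm_mult norm_power)
  have "summable (\<lambda>l. a l * of_real t ^ l)" if "\<bar>t\<bar> = \<bar>y\<bar>" for t
  proof (rule summable_norm_cancel)
    show "summable (\<lambda>l. norm (a l * of_real t ^ l))"
      using summable by (simp only: norm_eq [OF that])
  qed
  then have "(\<lambda>l. (a l * of_real y ^ l + a l * of_real (- y) ^ l) / 2)
      sums (((\<Sum>l. a l * of_real y ^ l) + (\<Sum>l. a l * of_real (- y) ^ l)) / 2)"
    by (intro sums_divide sums_add summable_sums) (simp_all del: of_real_minus)
  moreover have "(a l * of_real y ^ l + a l * of_real (- y) ^ l) / 2 = (if even l then a l else 0) * of_real y ^ l" for l
    by (cases "even l") simp_all
  ultimately have "(\<lambda>l. (if even l then a l else 0) * of_real y ^ l) sums (\<Sum>l. a l * of_real y ^ l)"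
    using even by simp
  then have "(\<lambda>l. cnj ((if even l then a l else 0) * of_real y ^ l)) sums cnj (\<Sum>l. a l * of_real y ^ l)"
    by (simp only: sums_cnj)
  then show "(\<lambda>l. cnj (if even l then a l else 0) * of_real y ^ l) sums cnj (\<Sum>l. a l * of_real y ^ l)"
    by simp
  show "summable (\<lambda>l. norm (cnj (if even l then a l else 0) * of_real y ^ l))"
    by (rule summable_comparison_test' [OF summable]) (simp add: norm_mult norm_power)
qed

lemma summable_on_weighted_power_series:
  fixes a c :: "nat \<Rightarrow> complex" and v :: "'p \<Rightarrow> complex" and w x :: "'p \<Rightarrow> real"
  assumes entire: "\<And>r. summable (\<lambda>l. norm (a l) * r ^ l)"
    and c_le: "\<And>l. norm (c l) \<le> norm (a l)"
    and w_nonneg: "\<And>p. p \<in> A \<Longrightarrow> 0 \<le> w p"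
    and v_le: "\<And>p. p \<in> A \<Longrightarrow> norm (v p) \<le> majorant a \<bar>x p\<bar>"
    and dominated: "(\<lambda>p. w p * majorant a \<bar>x p\<bar> ^ 2) summable_on A"
  shows "(\<lambda>(p, l). of_real (w p) * v p * (c l * of_real (x p) ^ l)) summable_on A \<times> UNIV"
proof -
  define B where "B = (\<lambda>(p, l). w p * majorant a \<bar>x p\<bar> * (norm (a l) * \<bar>x p\<bar> ^ l))"
  have majorant_nonneg': "0 \<le> majorant a \<bar>x p\<bar>" for p
    using entire by (rule majorant_nonneg) simp
  have "B summable_on A \<times> UNIV"
  proof (rule summable_on_SigmaI [where g = "\<lambda>p. w p * majorant a \<bar>x p\<bar> ^ 2"])
    fix p assume "p \<in> A"
    have "(\<lambda>l. norm (a l) * \<bar>x p\<bar> ^ l) sums majorant a \<bar>x p\<bar>"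
      unfolding majorant_def using entire by (rule summable_sums)
    then have "(\<lambda>l. B (p, l)) sums (w p * majorant a \<bar>x p\<bar> * majorant a \<bar>x p\<bar>)"
      unfolding B_def by (simp add: sums_mult)
    then show "((\<lambda>l. B (p, l)) has_sum w p * majorant a \<bar>x p\<bar> ^ 2) UNIV"
      using w_nonneg [OF \<open>p \<in> A\<close>] majorant_nonneg'
      by (intro sums_nonneg_imp_has_sum) (simp_all add: B_def power2_eq_square mult_ac)
  next
    fix p l assume "p \<in> A"
    then show "0 \<le> B (p, l)"
      using w_nonneg majorant_nonneg' by (simp add: B_def)
  qed (fact dominated)
  then show ?thesis
    unfolding summable_on_iff_abs_summable_on_complex
  proof (rule summable_on_comparison_test)
    fix pl assume "pl \<in> A \<times> (UNIV :: nat set)"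
    then obtain p l where pl: "pl = (p, l)" and "p \<in> A"
      by blast
    have "w p * norm (v p) * (norm (c l) * \<bar>x p\<bar> ^ l) \<le> B (p, l)"
      unfolding B_def
      using w_nonneg [OF \<open>p \<in> A\<close>] v_le [OF \<open>p \<in> A\<close>] c_le [of l] majorant_nonneg' [of p]
      by (auto intro!: mult_mono)
    then show "norm ((\<lambda>(p, l). of_real (w p) * v p * (c l * of_real (x p) ^ l)) pl) \<le> B pl"
      using w_nonneg [OF \<open>p \<in> A\<close>] by (simp add: pl norm_mult norm_power)
  qed simp
qed

lemma vanishing_even_moments_has_sum_norm_square:
  fixes a :: "nat \<Rightarrow> complex" and w x :: "'p \<Rightarrow> real"
  defines "f \<equiv> \<lambda>y. \<Sum>l. a l * of_real y ^ l"
  assumes entire: "\<And>r. summable (\<lambda>l. norm (a l) * r ^ l)"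
    and even: "\<And>y. f (- y) = f y"
    and w_nonneg: "\<And>p. p \<in> A \<Longrightarrow> 0 \<le> w p"
    and dominated: "(\<lambda>p. w p * majorant a \<bar>x p\<bar> ^ 2) summable_on A"
    and moments: "\<And>n. (\<Sum>\<^sub>\<infinity>p\<in>A. of_real (w p) * f (x p) * of_real (x p) ^ (2 * n)) = 0"
  shows "((\<lambda>p. w p * norm (f (x p)) ^ 2) has_sum 0) A"
proof -
  define c where "c l = cnj (if even l then a l else 0)" for l
  define Z where "Z p l = of_real (w p) * f (x p) * (c l * of_real (x p) ^ l)" for p l
  have cnj_f: "((\<lambda>l. c l * of_real y ^ l) has_sum cnj (f y)) UNIV" for y
    unfolding c_def f_def using entire even by (intro even_power_series_cnj_has_sum) (simp_all add: f_def)
  have Z_summable: "(\<lambda>(p, l). Z p l) summable_on A \<times> UNIV"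
    unfolding Z_def
  proof (rule summable_on_weighted_power_series [OF entire])
    show "norm (f y) \<le> majorant a \<bar>y\<bar>" for y
      unfolding f_def using norm_power_series_le_majorant [of a "of_real y"] entire by simp
  qed (use w_nonneg dominated in \<open>simp_all add: c_def\<close>)
  have inner: "(\<Sum>\<^sub>\<infinity>l. Z p l) = of_real (w p * norm (f (x p)) ^ 2)" for p
    by (simp add: Z_def infsum_cmult_right' infsumI [OF cnj_f] mult.assoc flip: complex_norm_square)
  have "(\<Sum>\<^sub>\<infinity>p\<in>A. \<Sum>\<^sub>\<infinity>l. Z p l) = (\<Sum>\<^sub>\<infinity>l. \<Sum>\<^sub>\<infinity>p\<in>A. Z p l)"
    using Z_summable by (rule infsum_swap_banach)
  also have "\<dots> = 0"
  proof -
    have "(\<Sum>\<^sub>\<infinity>p\<in>A. Z p l) = 0" for l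
    proof (cases "even l")
      case True
      then obtain n where "l = 2 * n"
        by blast
      moreover have "(\<Sum>\<^sub>\<infinity>p\<in>A. Z p l)
          = c l * (\<Sum>\<^sub>\<infinity>p\<in>A. of_real (w p) * f (x p) * of_real (x p) ^ l)"
        by (simp add: Z_def mult_ac flip: infsum_cmult_right')
      ultimately show ?thesis
        using moments by simp
    qed (simp add: Z_def c_def)
    then show ?thesis
      by simp
  qed
  finally have "(\<Sum>\<^sub>\<infinity>p\<in>A. complex_of_real (w p * norm (f (x p)) ^ 2)) = of_real 0"
    by (simp add: inner)
  moreover have "(\<lambda>p. complex_of_real (w p * norm (f (x p)) ^ 2)) summable_on A"
    using summable_on_Sigma_banach [OF Z_summable] by (simp add: inner)
  ultimately show ?thesis
    by (metis has_sum_infsum has_sum_of_real_iff)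
qed

lemma vanishing_even_moments_imp_zero:
  fixes a :: "nat \<Rightarrow> complex" and w x :: "'p \<Rightarrow> real"
  defines "f \<equiv> \<lambda>y. \<Sum>l. a l * of_real y ^ l"
  assumes entire: "\<And>r. summable (\<lambda>l. norm (a l) * r ^ l)"
    and even: "\<And>y. f (- y) = f y"
    and pos: "\<And>p. p \<in> A \<Longrightarrow> 0 < w p"
    and dominated: "(\<lambda>p. w p * majorant a \<bar>x p\<bar> ^ 2) summable_on A"
    and moments: "\<And>n. (\<Sum>\<^sub>\<infinity>p\<in>A. of_real (w p) * f (x p) * of_real (x p) ^ (2 * n)) = 0"
    and "p \<in> A"
  shows "f (x p) = 0"
proof -
  have w_nonneg: "0 \<le> w p" if "p \<in> A" for p
    using pos [OF that] by simp
  then have "((\<lambda>p. w p * norm (f (x p)) ^ 2) has_sum 0) A"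
    unfolding f_def using entire even dominated moments
    by (intro vanishing_even_moments_has_sum_norm_square) (simp_all add: f_def)
  then have "w p * norm (f (x p)) ^ 2 = 0"
    by (rule nonneg_has_sum_le_0D) (use w_nonneg \<open>p \<in> A\<close> in auto)
  then show ?thesis
    using pos [OF \<open>p \<in> A\<close>] by simp
qed

lemma power_series_eq_0_if_zeros_tend_to_0:
  fixes a z :: "nat \<Rightarrow> complex"
  assumes entire: "\<And>r. summable (\<lambda>l. norm (a l) * r ^ l)"
    and zeros: "\<And>k. (\<Sum>l. a l * z k ^ l) = 0" and "z \<longlonglongrightarrow> 0" "\<And>k. z k \<noteq> 0"
  shows "(\<Sum>l. a l * u ^ l) = 0"
proof (rule analytic_continuation [where f = "\<lambda>y. \<Sum>l. a l * y ^ l", OF _ open_UNIV connected_UNIV subset_UNIV UNIV_I])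
  have "summable (\<lambda>l. a l * y ^ l)" for y
    by (rule summable_norm_cancel) (use entire [of "norm y"] in \<open>simp add: norm_mult norm_power\<close>)
  then have "((\<lambda>y. \<Sum>l. a l * y ^ l) has_field_derivative (\<Sum>l. diffs a l * y ^ l)) (at y)" for y
    by (rule termdiffs_strong_converges_everywhere)
  then show "(\<lambda>y. \<Sum>l. a l * y ^ l) holomorphic_on UNIV"
    by (meson field_differentiable_at_within field_differentiable_def holomorphic_on_def)
  show "0 islimpt range z"
    unfolding islimpt_sequential using assms(3,4) by blast
qed (use zeros in auto)

section \<open>The nodes of the Jackson integral\<close>

definition qgrid_point :: "real \<Rightarrow> real \<Rightarrow> int \<times> real \<Rightarrow> real" where
  "qgrid_point q \<gamma> = (\<lambda>(k, \<epsilon>). \<epsilon> * q powi k * \<gamma>)"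

definition qgrid_weight :: "real \<Rightarrow> real \<Rightarrow> int \<times> real \<Rightarrow> real" where
  "qgrid_weight q \<gamma> = (\<lambda>(k, \<epsilon>). q powi k * \<gamma> * qgauss q (q powi k * \<gamma>))"

lemma qgrid_weight_pos:
  fixes q \<gamma> :: real
  assumes "0 < q" "q < 1" "0 < \<gamma>"
  shows "0 < qgrid_weight q \<gamma> p"
  using assms qgauss_pos [OF assms(1,2)] by (simp add: qgrid_weight_def split: prod.split)

lemma qint_eq_qgrid_sum:
  fixes F :: "complex \<Rightarrow> complex" and f :: "real \<Rightarrow> complex" and q \<gamma> :: real
  assumes F_real: "\<And>y. F (of_real y) = f y * of_real (qgauss q y)"
  shows "qint q \<gamma> (\<lambda>x. F x * x ^ m) = of_real (1 - q) *
    (\<Sum>\<^sub>\<infinity>p\<in>UNIV \<times> {1, -1}.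
      of_real (qgrid_weight q \<gamma> p) * f (qgrid_point q \<gamma> p) * of_real (qgrid_point q \<gamma> p) ^ m)"
  unfolding qint_def
proof (intro arg_cong [where f = "\<lambda>S. of_real (1 - q) * S"] infsum_cong)
  fix p :: "int \<times> real"
  assume "p \<in> UNIV \<times> {1, -1}"
  then obtain k \<epsilon> where p: "p = (k, \<epsilon>)" and "\<epsilon> = 1 \<or> \<epsilon> = -1"
    by auto
  define x where "x = qgrid_point q \<gamma> p"
  have x: "x = \<epsilon> * q powi k * \<gamma>"
    by (simp add: x_def p qgrid_point_def)
  then have "qgauss q x = qgauss q (q powi k * \<gamma>)"
    using \<open>\<epsilon> = 1 \<or> \<epsilon> = -1\<close> by auto
  then have "of_real (qgrid_weight q \<gamma> p) * f x * of_real x ^ m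
      = of_real (q powi k * \<gamma>) * (F (of_real x) * of_real x ^ m)"
    by (simp add: p qgrid_weight_def F_real)
  also have "\<dots> = qint_term q \<gamma> (\<lambda>x. F x * x ^ m) p"
    by (simp add: p qint_term_def x)
  finally show "qint_term q \<gamma> (\<lambda>x. F x * x ^ m) p
      = of_real (qgrid_weight q \<gamma> p) * f (qgrid_point q \<gamma> p) * of_real (qgrid_point q \<gamma> p) ^ m"
    by (simp add: x_def)
qed

lemma summable_on_qgrid_weight_majorant:
  fixes a :: "nat \<Rightarrow> complex" and q s \<gamma> C :: real
  assumes "0 < q" "q < 1" "0 < s" "s < 1" "0 < \<gamma>"
    and coeffs: "\<And>l. norm (a l) \<le> C * s^l * q powr (real l ^ 2 / 2)"
  shows "(\<lambda>p. qgrid_weight q \<gamma> p * majorant a \<bar>qgrid_point q \<gamma> p\<bar> ^ 2)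
    summable_on UNIV \<times> {1, -1}"
proof -
  have "(\<lambda>(k, \<epsilon>). q powi k * \<gamma> * qgauss q (q powi k * \<gamma>) * majorant a (q powi k * \<gamma>) ^ 2)
      summable_on UNIV \<times> {1, -1 :: real}"
    using summable_on_qgrid [OF assms] qgauss_pos [OF assms(1,2)] assms
    by (intro summable_on_Times_finite_right) (auto intro!: mult_nonneg_nonneg simp: less_imp_le)
  then show ?thesis
    by (rule summable_on_cong [THEN iffD1, rotated])
      (use assms(1,5) in \<open>auto simp: qgrid_weight_def qgrid_point_def abs_mult\<close>)
qed

theorem lemma5p9:
  fixes q s \<gamma> :: real and F :: "complex \<Rightarrow> complex"
  assumes "0 < q" "q < 1"
    and "0 < s" "s < 1"
    and "F \<in> M_s q s"
    and "\<forall>x. \<bar>Im x\<bar> < 1 \<longrightarrow> F (- x) = F x"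
    and "\<gamma> > 0"
    and "\<forall>k::nat. qint_exists q \<gamma> (\<lambda>x. F x * x ^ (2 * k)) \<and>
                   qint q \<gamma> (\<lambda>x. F x * x ^ (2 * k)) = 0"
  shows "\<forall>x. \<bar>Im x\<bar> < 1 \<longrightarrow> F x = 0"
proof -
  obtain a C where coeffs: "\<And>l. norm (a l) \<le> C * s ^ l * q powr (real l ^ 2 / 2)"
    and F_eq: "\<And>x. \<bar>Im x\<bar> < 1 \<Longrightarrow> F x = (\<Sum>l. a l * x ^ l) * e_q (q ^ 2) (- (x ^ 2))"
    using assms(5) unfolding M_s_def by blast
  define f where "f y = (\<Sum>l. a l * of_real y ^ l)" for y :: real
  have entire: "\<And>r. summable (\<lambda>l. norm (a l) * r ^ l)"
    using summable_majorant [OF assms(1,2) coeffs] .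
  have F_real: "F (of_real y) = f y * of_real (qgauss q y)" for y
    using F_eq [of "of_real y"] e_q_neg_square_of_real [OF assms(1,2), of y] by (simp add: f_def)
  have zero_on_grid: "f (qgrid_point q \<gamma> p) = 0" if "p \<in> UNIV \<times> {1, -1}" for p
    unfolding f_def
  proof (rule vanishing_even_moments_imp_zero [OF entire _ qgrid_weight_pos
        summable_on_qgrid_weight_majorant [OF assms(1-4,7) coeffs] _ that])
    show "(\<Sum>l. a l * of_real (- y) ^ l) = (\<Sum>l. a l * of_real y ^ l)" for y
      using F_real [of y] F_real [of "- y"] assms(6) qgauss_pos [OF assms(1,2), of y]
      by (simp add: f_def)
    show "(\<Sum>\<^sub>\<infinity>p\<in>UNIV \<times> {1, -1}. of_real (qgrid_weight q \<gamma> p)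
        * (\<Sum>l. a l * of_real (qgrid_point q \<gamma> p) ^ l) * of_real (qgrid_point q \<gamma> p) ^ (2 * n)) = 0" for n
      using assms(2,8) qint_eq_qgrid_sum [OF F_real, of \<gamma> "2 * n"] by (simp add: f_def)
  qed (use assms(1,2,7) in auto)
  have "(\<Sum>l. a l * complex_of_real (q ^ k * \<gamma>) ^ l) = 0" for k :: nat
    using zero_on_grid [of "(int k, 1)"] by (simp add: qgrid_point_def f_def)
  then have "(\<Sum>l. a l * u ^ l) = 0" for u
  proof (rule power_series_eq_0_if_zeros_tend_to_0 [OF entire])
    have "(\<lambda>k. q ^ k * \<gamma>) \<longlonglongrightarrow> 0"
      using assms(1,2) by (intro tendsto_mult_left_zero LIMSEQ_power_zero) simp_all
    from tendsto_of_real [OF this] show "(\<lambda>k. complex_of_real (q ^ k * \<gamma>)) \<longlonglongrightarrow> 0"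
      by simp
  qed (use assms(1,7) in simp)
  then show ?thesis
    using F_eq by simp
qed

end
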